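(* Let $S$ be a set of $n\ge 3$ points in the plane in general position (no four points of $S$ cocircular, no three collinear), and assume $n$ is odd. Then the reduced Euler characteristic of the Voronoi poset of $S$ vanishes: $$\tilde\chi(\Pi(S)) := \sum_{i=-1}^{n-1}(-1)^i \bar f_i = 0,$$ where $\bar f_i$ is the number of elements of $\Pi(S)$ of cardinality $i+1$.
   Context: For points $x,y$ in the plane let $h(x,y)=\{p\in\mathbb{R}^2 : d(x,p)\le d(y,p)\}$. For $A\subseteq S$ let $V(A)=\bigcap_{x\in A,\,y\in S\setminus A} h(x,y)$ (equal to $\mathbb{R}^2$ when $A=\emptyset$). The Voronoi poset $\Pi(S)$ is the set of all subsets $A\subseteq S$ (of any size $0\le|A|\le n$) with $V(A)\ne\emptyset$, ordered by inclusion (with points identified with labels in $[n]$). Thus $\bar f_{-1}=1$ (the empty set) and, for $1\le k\le n$, $\bar f_{k-1}$ equals the number of regions of the $k$-th order Voronoi diagram. *)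

theory Defs
  imports "HOL-Analysis.Analysis"
begin

type_synonym point = "real^2"

definition halfplane :: "point \<Rightarrow> point \<Rightarrow> point set" where
  "halfplane x y = {p. dist x p \<le> dist y p}"

definition voronoi_region :: "point set \<Rightarrow> point set \<Rightarrow> point set" where
  "voronoi_region S A = (\<Inter>x\<in>A. \<Inter>y\<in>S - A. halfplane x y)"

definition voronoi_poset :: "point set \<Rightarrow> point set set" where
  "voronoi_poset S = {A. A \<subseteq> S \<and> voronoi_region S A \<noteq> {}}"

definition fbar :: "point set \<Rightarrow> int \<Rightarrow> nat" where
  "fbar S i = card {A \<in> voronoi_poset S. int (card A) = i + 1}"

definition reduced_euler_char :: "point set \<Rightarrow> real" where
  "reduced_euler_char S = (\<Sum>i\<in>{-1..int (card S) - 1}. (-1) powi i * real (fbar S i))"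

definition no_three_collinear :: "point set \<Rightarrow> bool" where
  "no_three_collinear S \<longleftrightarrow> (\<forall>a\<in>S. \<forall>b\<in>S. \<forall>c\<in>S.
     a \<noteq> b \<and> a \<noteq> c \<and> b \<noteq> c \<longrightarrow> \<not> collinear {a, b, c})"

definition no_four_cocircular :: "point set \<Rightarrow> bool" where
  "no_four_cocircular S \<longleftrightarrow> (\<forall>a\<in>S. \<forall>b\<in>S. \<forall>c\<in>S. \<forall>d\<in>S.
     distinct [a, b, c, d] \<longrightarrow> \<not> (\<exists>z r. {a, b, c, d} \<subseteq> sphere z r))"

end

theory Submission
  imports Defs
begin

(*
  Lift circles to points of R^3: a pair (u, c) stands for the circle with centre u and squared
  radius |u|^2 + c, and the power |x - u|^2 - |u|^2 - c of a site x is affine in (u, c).  A set A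
  belongs to the Voronoi poset iff some circle has A weakly inside and the other sites weakly
  outside, i.e. iff a polyhedron P_A in R^3 is non-empty.

  Fix sigma = 1 or -1 and minimise sigma times the power of an auxiliary point z over P_A, with z
  off every line through two sites.  If this linear programme is unbounded, reversing the
  unbounded direction shows that S - A lies in the poset with an unbounded programme for -sigma.
  Otherwise general position makes the optimum a unique circle through exactly three sites, and
  toggling those three sites yields a set whose programme for -sigma has the same optimum.  Both
  pairings reverse the parity of |A|, the first because |S| is odd and the second because 3 is
  odd.  Splitting the poset into bounded and unbounded programmes once for sigma = 1 and once for
  sigma = -1 then forces the alternating sum of (-1)^|A| over the poset to vanish.
*)


section \<open>Perpendiculars and collinearity in the plane\<close>

definition perp :: "real^2 \<Rightarrow> real^2" where
  "perp v = (\<chi> i. if i = 1 then - v$2 else v$1)"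

lemma perp_nth [simp]: "perp v $ 1 = - v$2" "perp v $ 2 = v$1"
  by (simp_all add: perp_def)

lemma inner_real2: "(a::real^2) \<bullet> b = a$1 * b$1 + a$2 * b$2"
  by (simp add: inner_vec_def sum_2)

lemma perp_eq_0_iff [simp]: "perp v = 0 \<longleftrightarrow> v = 0"
  by (auto simp: vec_eq_iff forall_2)

lemma inner_perp_self [simp]: "v \<bullet> perp v = 0"
  by (simp add: inner_real2)

lemma inner_perp_eq_0_iff: "a \<bullet> perp b = 0 \<longleftrightarrow> a = 0 \<or> (\<exists>c. b = c *\<^sub>R a)"
proof
  assume "a \<bullet> perp b = 0"
  then have ab: "a$2 * b$1 = a$1 * b$2"
    by (simp add: inner_real2 algebra_simps)
  show "a = 0 \<or> (\<exists>c. b = c *\<^sub>R a)"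
  proof (cases "a$1 = 0")
    case True
    show ?thesis
    proof (cases "a$2 = 0")
      case False
      then have "b = (b$2 / a$2) *\<^sub>R a"
        using True ab by (simp add: vec_eq_iff forall_2)
      then show ?thesis by blast
    qed (use True in \<open>simp add: vec_eq_iff forall_2\<close>)
  next
    case False
    then have "b = (b$1 / a$1) *\<^sub>R a"
      using ab by (simp add: vec_eq_iff forall_2 field_simps)
    then show ?thesis by blast
  qed
qed (auto simp: inner_real2)

lemma collinear_iff_inner_perp:
  fixes x y w :: "real^2"
  shows "collinear {x, y, w} \<longleftrightarrow> (y - x) \<bullet> perp (w - x) = 0"
proof -
  have "collinear {x, y, w} \<longleftrightarrow> collinear {y, x, w}"
    by (simp add: insert_commute)
  also have "\<dots> \<longleftrightarrow> collinear {0, y - x, w - x}"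
    by (rule collinear_3) simp
  finally show ?thesis
    by (auto simp: collinear_lemma inner_perp_eq_0_iff)
qed

lemma eq_0_if_orthogonal_to_independent:
  fixes a b w :: "real^2"
  assumes "a \<bullet> w = 0" "b \<bullet> w = 0" "a \<bullet> perp b \<noteq> 0"
  shows "w = 0"
proof -
  have "w$1 * (a \<bullet> perp b) = a$2 * (b \<bullet> w) - b$2 * (a \<bullet> w)"
    and "w$2 * (a \<bullet> perp b) = b$1 * (a \<bullet> w) - a$1 * (b \<bullet> w)"
    by (simp_all add: inner_real2 algebra_simps)
  then have "w$1 = 0" "w$2 = 0"
    using assms by simp_all
  then show ?thesis
    by (simp add: vec_eq_iff forall_2)
qed

lemma inner_perp_translate:
  fixes x y z :: "real^2"
  shows "(x - z) \<bullet> perp (y - z) = x \<bullet> perp y + perp (x - y) \<bullet> z"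
  unfolding inner_real2 by simp argo

lemma collinear_iff_hyperplane:
  fixes x y z :: "real^2"
  shows "collinear {z, x, y} \<longleftrightarrow> perp (x - y) \<bullet> z = - (x \<bullet> perp y)"
  unfolding collinear_iff_inner_perp inner_perp_translate by linarith

lemma exists_point_off_lines:
  fixes S :: "(real^2) set"
  assumes "finite S"
  obtains z where "z \<notin> S" "\<And>x y. x \<in> S \<Longrightarrow> y \<in> S \<Longrightarrow> x \<noteq> y \<Longrightarrow> \<not> collinear {z, x, y}"
proof -
  define line where "line x y = {z. perp (x - y) \<bullet> z = - (x \<bullet> perp y)}" for x y :: "real^2"
  define L where "L = (\<lambda>(x, y). line x y) ` {(x, y) \<in> S \<times> S. x \<noteq> y}"
  have "finite {(x, y) \<in> S \<times> S. x \<noteq> y}"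
    by (rule finite_subset[of _ "S \<times> S"]) (use assms in auto)
  then have "finite L"
    unfolding L_def by (rule finite_imageI)
  moreover have "negligible l" if "l \<in> L" for l
    using that by (auto simp: L_def line_def intro!: negligible_hyperplane)
  ultimately have "negligible (S \<union> \<Union>L)"
    using assms by (simp add: negligible_Union negligible_finite)
  then obtain z where z: "z \<notin> S \<union> \<Union>L"
    using non_negligible_UNIV by (metis UNIV_I subsetI subset_antisym)
  show ?thesis
  proof (rule that)
    show "z \<notin> S"
      using z by blast
    fix x y assume "x \<in> S" "y \<in> S" "x \<noteq> y"
    then have "line x y \<in> L"
      unfolding L_def by (intro image_eqI[where x="(x, y)"]) auto
    then show "\<not> collinear {z, x, y}"
      using z by (auto simp: line_def collinear_iff_hyperplane)
  qed
qed

section \<open>Parity and sign-reversing bijections\<close>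

lemma card_ge_3_obtains:
  assumes "3 \<le> card A"
  obtains x y w where "x \<in> A" "y \<in> A" "w \<in> A" "distinct [x, y, w]"
proof -
  obtain B where "B \<subseteq> A" "card B = 3"
    using obtain_subset_with_card_n[OF assms] by metis
  then show ?thesis
    using that unfolding card_3_iff by auto
qed

lemma card_ge_4_obtains:
  assumes "4 \<le> card A"
  obtains a b c d where "{a, b, c, d} \<subseteq> A" "distinct [a, b, c, d]"
proof -
  obtain B where B: "B \<subseteq> A" "card B = Suc 3"
    using obtain_subset_with_card_n[OF assms] by force
  then obtain a B' where a: "B = insert a B'" "a \<notin> B'" "card B' = 3"
    unfolding card_Suc_eq by blast
  then obtain x y w where "B' = {x, y, w}" "x \<noteq> y" "y \<noteq> w" "x \<noteq> w"
    unfolding card_3_iff by blast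
  then show ?thesis
    using B a by (intro that[of a x y w]) auto
qed

definition sym_diff :: "'a set \<Rightarrow> 'a set \<Rightarrow> 'a set" where
  "sym_diff A B = (A - B) \<union> (B - A)"

lemma sym_diff_sym_diff_cancel: "sym_diff (sym_diff A B) B = A"
  by (auto simp: sym_diff_def)

lemma minus_one_power_card_sym_diff:
  assumes "finite A" "finite B"
  shows "(-1::'a::ring_1) ^ card (sym_diff A B) = (-1) ^ card A * (-1) ^ card B"
proof -
  have "card (A \<union> B - A \<inter> B) = card (A \<union> B) - card (A \<inter> B)"
    using assms by (intro card_Diff_subset) auto
  moreover have "sym_diff A B = A \<union> B - A \<inter> B"
    by (auto simp: sym_diff_def)
  ultimately have "card (sym_diff A B) = card (A \<union> B) - card (A \<inter> B)"
    by simp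
  moreover have "card (A \<inter> B) \<le> card (A \<union> B)"
    using assms by (intro card_mono) auto
  ultimately have "card (sym_diff A B) + 2 * card (A \<inter> B) = card A + card B"
    using card_Un_Int[OF assms] by linarith
  then have "(-1::'a) ^ (card A + card B) = (-1) ^ card (sym_diff A B)"
    by (metis power_add power_minus1_even mult_1_right)
  then show ?thesis
    by (simp add: power_add)
qed

lemma minus_one_powi_pred: "(-1::'a::field) powi (int m - 1) = - ((-1) ^ m)"
proof (cases m)
  case (Suc k)
  then have "int m - 1 = int k"
    by simp
  then show ?thesis
    using Suc by simp
qed (simp add: power_int_minus)

lemma sum_eq_0_by_sign_reversing_bijections:
  fixes f :: "'a \<Rightarrow> 'b::linordered_ab_group_add"
  assumes "finite P"
    and "bij_betw h {x \<in> P. \<not> p x} {x \<in> P. \<not> q x}" "\<And>x. x \<in> P \<Longrightarrow> \<not> p x \<Longrightarrow> f (h x) = - f x"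
    and "bij_betw k {x \<in> P. q x} {x \<in> P. p x}" "\<And>x. x \<in> P \<Longrightarrow> q x \<Longrightarrow> f (k x) = - f x"
  shows "sum f P = 0"
proof -
  have split: "sum f P = sum f {x \<in> P. r x} + sum f {x \<in> P. \<not> r x}" for r
    using assms(1) by (subst sum.union_disjoint[symmetric]) (auto intro: sum.cong)
  have "sum f {x \<in> P. \<not> q x} = sum (\<lambda>x. f (h x)) {x \<in> P. \<not> p x}"
    by (rule sum.reindex_bij_betw[OF assms(2), symmetric])
  also have "\<dots> = - sum f {x \<in> P. \<not> p x}"
    using assms(3) by (simp add: sum_negf)
  finally have neg_p: "sum f {x \<in> P. \<not> q x} = - sum f {x \<in> P. \<not> p x}" .
  have "sum f {x \<in> P. p x} = sum (\<lambda>x. f (k x)) {x \<in> P. q x}"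
    by (rule sum.reindex_bij_betw[OF assms(4), symmetric])
  also have "\<dots> = - sum f {x \<in> P. q x}"
    using assms(5) by (simp add: sum_negf)
  finally have "sum f P = - sum f P"
    using split[of p] split[of q] neg_p by simp
  then show ?thesis
    by simp
qed

section \<open>Thresholds and step lengths for finitely many inequalities\<close>

lemma exists_threshold_between:
  fixes f :: "'a \<Rightarrow> 'b::linorder"
  assumes "finite A" "finite B" "\<And>x y. x \<in> A \<Longrightarrow> y \<in> B \<Longrightarrow> f x \<le> f y"
  obtains c where "\<And>x. x \<in> A \<Longrightarrow> f x \<le> c" "\<And>y. y \<in> B \<Longrightarrow> c \<le> f y"
proof (cases "A = {}")
  case True
  show ?thesis
  proof (cases "B = {}")
    case False
    then show ?thesis
      using True assms(2) by (intro that[of "Min (f ` B)"]) auto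
  qed (use True that in blast)
next
  case False
  then show ?thesis
    using assms by (intro that[of "Max (f ` A)"]) auto
qed

lemma exists_small_step_nonneg:
  fixes a b :: "'i \<Rightarrow> real"
  assumes "finite I" "\<And>i. i \<in> I \<Longrightarrow> 0 < a i"
  obtains t where "t > 0" "\<And>i. i \<in> I \<Longrightarrow> 0 \<le> a i + t * b i"
proof -
  have "\<forall>\<^sub>F t in at_right 0. \<forall>i\<in>I. 0 < a i + t * b i"
  proof (rule eventually_ball_finite[OF assms(1)], intro ballI)
    fix i assume "i \<in> I"
    have "((\<lambda>t. a i + t * b i) \<longlongrightarrow> a i + 0 * b i) (at_right 0)"
      by (intro tendsto_intros)
    then show "\<forall>\<^sub>F t in at_right 0. 0 < a i + t * b i"
      using assms(2)[OF \<open>i \<in> I\<close>] by (simp add: order_tendstoD)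
  qed
  then obtain e where e: "e > 0" "\<And>t. 0 < t \<Longrightarrow> t < e \<Longrightarrow> \<forall>i\<in>I. 0 < a i + t * b i"
    unfolding eventually_at_right_field by auto
  then have "\<forall>i\<in>I. 0 < a i + e / 2 * b i"
    using e(2)[of "e / 2"] by simp
  then show ?thesis
    using \<open>e > 0\<close> by (intro that[of "e / 2"]) (auto simp: less_imp_le)
qed

lemma exists_large_step_nonneg:
  fixes a b :: "'i \<Rightarrow> real"
  assumes "finite I" "\<And>i. i \<in> I \<Longrightarrow> 0 \<le> b i" "\<And>i. i \<in> I \<Longrightarrow> b i = 0 \<Longrightarrow> 0 \<le> a i"
  obtains s where "\<And>i. i \<in> I \<Longrightarrow> 0 \<le> a i + s * b i"
proof -
  have "\<forall>\<^sub>F s in at_top. \<forall>i\<in>I. 0 \<le> a i + s * b i"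
  proof (rule eventually_ball_finite[OF assms(1)], intro ballI)
    fix i assume i: "i \<in> I"
    show "\<forall>\<^sub>F s in at_top. 0 \<le> a i + s * b i"
    proof (cases "b i = 0")
      case False
      then have "b i > 0"
        using assms(2)[OF i] by simp
      then have step: "0 \<le> a i + s * b i" if "- (a i / b i) \<le> s" for s
        using mult_right_mono[OF that, of "b i"] by simp
      show ?thesis
        using eventually_ge_at_top[of "- (a i / b i)"] by (rule eventually_mono) (rule step)
    qed (use assms(3)[OF i] in simp)
  qed
  then show ?thesis
    using that by (auto simp: eventually_at_top_linorder)
qed

lemma ratio_test:
  fixes a b :: "'i \<Rightarrow> real"
  assumes "finite I" "\<And>i. i \<in> I \<Longrightarrow> 0 \<le> a i" "\<And>i. i \<in> I \<Longrightarrow> a i = 0 \<Longrightarrow> b i = 0"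
    and "\<exists>i\<in>I. b i < 0"
  obtains t where "t > 0" "\<And>i. i \<in> I \<Longrightarrow> 0 \<le> a i + t * b i" "\<exists>i\<in>I. a i \<noteq> 0 \<and> a i + t * b i = 0"
proof -
  define J where "J = {i \<in> I. b i < 0}"
  define t where "t = Min ((\<lambda>i. - a i / b i) ` J)"
  have J: "finite J" "J \<noteq> {}"
    using assms(1,4) by (auto simp: J_def)
  have a_pos: "0 < a i" if "i \<in> J" for i
    using that assms(2,3) by (force simp: J_def)
  have "t \<in> (\<lambda>i. - a i / b i) ` J"
    unfolding t_def using J by (intro Min_in) auto
  then obtain i0 where i0: "i0 \<in> J" "t = - a i0 / b i0"
    by blast
  have t_le: "t \<le> - a i / b i" if "i \<in> J" for i
    using J that by (simp add: t_def)
  have t_pos: "t > 0"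
    using i0 a_pos[OF i0(1)] by (simp add: J_def divide_pos_neg)
  have "0 \<le> a i + t * b i" if i: "i \<in> I" for i
  proof (cases "i \<in> J")
    case True
    then have "- a i / b i * b i \<le> t * b i"
      using t_le by (intro mult_right_mono_neg) (auto simp: J_def)
    then show ?thesis
      using True by (simp add: J_def)
  next
    case False
    then show ?thesis
      by (intro add_nonneg_nonneg mult_nonneg_nonneg) (use i assms(2) t_pos in \<open>auto simp: J_def\<close>)
  qed
  moreover have "a i0 \<noteq> 0" "a i0 + t * b i0 = 0"
    using i0 a_pos[OF i0(1)] by (auto simp: J_def)
  ultimately show ?thesis
    using t_pos i0(1) that unfolding J_def by blast
qed

section \<open>Power of a point with respect to a circle\<close>

text \<open>The pair \<open>(u, c)\<close> encodes the circle with centre \<open>u\<close> and squared radius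
  \<open>(norm u)\<^sup>2 + c\<close>; the power of \<open>x\<close> is affine in \<open>(u, c)\<close> and \<open>power_slope x\<close> is its
  linear part.\<close>

definition circle_power :: "'a::real_inner \<Rightarrow> 'a \<times> real \<Rightarrow> real" where
  "circle_power x q = (norm x)\<^sup>2 - 2 * (x \<bullet> fst q) - snd q"

definition power_slope :: "'a::real_inner \<Rightarrow> 'a \<times> real \<Rightarrow> real" where
  "power_slope x d = - 2 * (x \<bullet> fst d) - snd d"

lemma circle_power_add_scaleR:
  "circle_power x (q + t *\<^sub>R d) = circle_power x q + t * power_slope x d"
  by (simp add: circle_power_def power_slope_def algebra_simps)

lemma circle_power_diff: "circle_power x q - circle_power x q' = power_slope x (q - q')"
  by (simp add: circle_power_def power_slope_def algebra_simps)

lemma power_slope_sub: "power_slope y d - power_slope x d = - 2 * ((y - x) \<bullet> fst d)"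
  by (simp add: power_slope_def algebra_simps)

lemma power_slope_uminus: "power_slope x (- d) = - power_slope x d"
  by (simp add: power_slope_def)

lemma circle_power_step_away:
  "circle_power x (v + t *\<^sub>R (v - q)) = circle_power x v + t * (circle_power x v - circle_power x q)"
  by (simp only: circle_power_add_scaleR circle_power_diff)

lemma circle_power_midpoint:
  "circle_power x (midpoint q q') = (circle_power x q + circle_power x q') / 2"
  by (simp add: midpoint_def circle_power_def inner_add_right field_simps)

lemma circle_power_eq_dist: "circle_power x (u, c) = (dist x u)\<^sup>2 - (norm u)\<^sup>2 - c"
  by (simp add: circle_power_def dist_norm power2_norm_eq_inner inner_commute
      algebra_simps)

lemma circle_power_Thales: "circle_power x (midpoint a b, - (a \<bullet> b)) = (x - a) \<bullet> (x - b)"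
  by (simp add: circle_power_def midpoint_def power2_norm_eq_inner inner_commute
      algebra_simps)

lemma exists_circle_through_le_2:
  assumes "finite Z" "card Z \<le> 2"
  obtains q where "\<And>x. x \<in> Z \<Longrightarrow> circle_power x q = 0"
proof -
  obtain a b where "Z \<subseteq> {a, b}"
  proof -
    consider "card Z = 0" | "card Z = 1" | "card Z = 2"
      using assms(2) by linarith
    then show ?thesis
      using assms(1) that by cases (auto simp: card_1_singleton_iff card_2_iff)
  qed
  then show ?thesis
    by (intro that[of "(midpoint a b, - (a \<bullet> b))"]) (auto simp: circle_power_Thales)
qed

lemma exists_power_slope_direction:
  assumes "\<sigma> \<noteq> 0" "(z - x) \<bullet> u \<noteq> 0" "\<forall>w\<in>T. (w - x) \<bullet> u = 0"
  shows "\<exists>d. \<sigma> * power_slope z d < 0 \<and> (\<forall>w\<in>T. power_slope w d = 0)"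
proof -
  define k where "k = \<sigma> * ((z - x) \<bullet> u)"
  define d where "d = (k *\<^sub>R u, - 2 * (x \<bullet> (k *\<^sub>R u)))"
  have slope: "power_slope w d = - 2 * k * ((w - x) \<bullet> u)" for w
    by (simp add: d_def power_slope_def algebra_simps)
  have "\<sigma> * power_slope z d = - 2 * k\<^sup>2"
    by (simp add: slope k_def power2_eq_square)
  also have "\<dots> < 0"
    using assms(1,2) by (simp add: k_def)
  finally have "\<sigma> * power_slope z d < 0" .
  moreover have "\<forall>w\<in>T. power_slope w d = 0"
    using assms(3) by (simp add: slope)
  ultimately show ?thesis
    by blast
qed

lemma power_slope_eq_0_imp_eq_0:
  fixes x y w :: point
  assumes "\<not> collinear {x, y, w}"
    and "power_slope x d = 0" "power_slope y d = 0" "power_slope w d = 0"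
  shows "d = 0"
proof -
  have "(y - x) \<bullet> fst d = 0" "(w - x) \<bullet> fst d = 0"
    using power_slope_sub[of y d x] power_slope_sub[of w d x] assms(2-4) by simp_all
  moreover have "(y - x) \<bullet> perp (w - x) \<noteq> 0"
    using assms(1) by (simp add: collinear_iff_inner_perp)
  ultimately have "fst d = 0"
    by (rule eq_0_if_orthogonal_to_independent)
  moreover have "snd d = 0"
    using assms(2) calculation by (simp add: power_slope_def)
  ultimately show ?thesis
    by (simp add: prod_eq_iff)
qed

lemma circle_eq_if_powers_eq:
  fixes x y w :: point
  assumes "\<not> collinear {x, y, w}" and "circle_power x q = circle_power x q'"
    and "circle_power y q = circle_power y q'" "circle_power w q = circle_power w q'"
  shows "q = q'"
  using power_slope_eq_0_imp_eq_0[OF assms(1), of "q - q'"] assms(2-4)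
  by (simp add: circle_power_diff[symmetric])

lemma card_sphere_le_3:
  assumes "no_four_cocircular S"
  shows "card (S \<inter> sphere u r) \<le> 3"
proof (rule ccontr)
  assume "\<not> ?thesis"
  then have "4 \<le> card (S \<inter> sphere u r)"
    by simp
  then obtain a b c d where "{a, b, c, d} \<subseteq> S \<inter> sphere u r" "distinct [a, b, c, d]"
    by (rule card_ge_4_obtains)
  then show False
    using assms unfolding no_four_cocircular_def by blast
qed

section \<open>Separating circles and the Voronoi poset\<close>

definition separating :: "'a::real_inner set \<Rightarrow> 'a set \<Rightarrow> 'a \<times> real \<Rightarrow> bool" where
  "separating S A q \<longleftrightarrow> (\<forall>x\<in>S \<inter> A. circle_power x q \<le> 0) \<and> (\<forall>x\<in>S - A. 0 \<le> circle_power x q)"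

definition on_circle :: "'a::real_inner set \<Rightarrow> 'a \<times> real \<Rightarrow> 'a set" where
  "on_circle S q = {x \<in> S. circle_power x q = 0}"

definition side :: "'a set \<Rightarrow> 'a \<Rightarrow> real" where
  "side A x = (if x \<in> A then -1 else 1)"

lemma separating_iff_side: "separating S A q \<longleftrightarrow> (\<forall>x\<in>S. 0 \<le> side A x * circle_power x q)"
  by (auto simp: separating_def side_def)

lemma side_sym_diff: "side (sym_diff A T) x = (if x \<in> T then - side A x else side A x)"
  by (simp add: side_def sym_diff_def)

lemma side_Diff: "x \<in> S \<Longrightarrow> side (S - A) x = - side A x"
  by (simp add: side_def)

lemma separating_step_to_new_site:
  assumes "finite S" "separating S A q" "\<And>x. x \<in> on_circle S q \<Longrightarrow> power_slope x d = 0"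
    and "\<exists>x\<in>S. side A x * power_slope x d < 0"
  obtains t where "t > 0" "separating S A (q + t *\<^sub>R d)" "on_circle S q \<subset> on_circle S (q + t *\<^sub>R d)"
proof -
  define a where "a x = side A x * circle_power x q" for x
  define b where "b x = side A x * power_slope x d" for x
  have a_nonneg: "0 \<le> a x" if "x \<in> S" for x
    using assms(2) that by (simp add: a_def separating_iff_side)
  have b_eq_0: "b x = 0" if "x \<in> S" "a x = 0" for x
    using that assms(3) by (simp add: a_def b_def side_def on_circle_def split: if_splits)
  have "\<exists>x\<in>S. b x < 0"
    using assms(4) by (simp add: b_def)
  then obtain t where t: "t > 0" "\<And>x. x \<in> S \<Longrightarrow> 0 \<le> a x + t * b x"
    "\<exists>x\<in>S. a x \<noteq> 0 \<and> a x + t * b x = 0"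
    using ratio_test[of S a b, OF assms(1) a_nonneg b_eq_0] by blast
  have side_step: "side A x * circle_power x (q + t *\<^sub>R d) = a x + t * b x" for x
    by (simp add: a_def b_def circle_power_add_scaleR algebra_simps)
  show ?thesis
  proof (rule that)
    show "t > 0" "separating S A (q + t *\<^sub>R d)"
      using t(1,2) by (simp_all add: separating_iff_side side_step)
    show "on_circle S q \<subset> on_circle S (q + t *\<^sub>R d)"
    proof
      show "on_circle S q \<subseteq> on_circle S (q + t *\<^sub>R d)"
        using assms(3) by (auto simp: on_circle_def circle_power_add_scaleR)
      obtain x where "x \<in> S" "a x \<noteq> 0" "a x + t * b x = 0"
        using t(3) by blast
      then have "x \<in> on_circle S (q + t *\<^sub>R d) - on_circle S q"
        using side_step[of x] by (auto simp: a_def on_circle_def side_def split: if_splits)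
      then show "on_circle S q \<noteq> on_circle S (q + t *\<^sub>R d)"
        by blast
    qed
  qed
qed

lemma separating_step_away:
  assumes "finite S" "separating S A v" "separating S (sym_diff A (on_circle S v)) q"
  obtains t where "t > 0" "separating S A (v + t *\<^sub>R (v - q))"
proof -
  define a where "a x = side A x * circle_power x v" for x
  define b where "b x = side A x * (circle_power x v - circle_power x q)" for x
  have "0 < a x" if "x \<in> S - on_circle S v" for x
    using assms(2) that by (force simp: a_def separating_iff_side on_circle_def side_def)
  then obtain t where t: "t > 0" "\<And>x. x \<in> S - on_circle S v \<Longrightarrow> 0 \<le> a x + t * b x"
    using exists_small_step_nonneg[of "S - on_circle S v" a b] assms(1) by blast
  have "0 \<le> side A x * circle_power x (v + t *\<^sub>R (v - q))" if x: "x \<in> S" for x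
  proof (cases "x \<in> on_circle S v")
    case True
    then have "side A x * circle_power x (v + t *\<^sub>R (v - q)) =
        t * (side (sym_diff A (on_circle S v)) x * circle_power x q)"
      unfolding circle_power_step_away by (simp add: side_sym_diff on_circle_def)
    moreover have "0 \<le> side (sym_diff A (on_circle S v)) x * circle_power x q"
      using assms(3) x by (simp add: separating_iff_side)
    ultimately show ?thesis
      using t(1) by simp
  next
    case False
    then show ?thesis
      using t(2)[of x] x unfolding circle_power_step_away by (simp add: a_def b_def algebra_simps)
  qed
  then have "separating S A (v + t *\<^sub>R (v - q))"
    unfolding separating_iff_side by blast
  with t(1) show ?thesis
    by (rule that)
qed

lemma separating_midpoint:
  assumes "separating S A v" "separating S A w"
  shows "separating S A (midpoint v w)" and "on_circle S (midpoint v w) \<subseteq> on_circle S v \<inter> on_circle S w"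
proof -
  show "separating S A (midpoint v w)"
    using assms by (auto simp: separating_def circle_power_midpoint intro: add_nonpos_nonpos add_nonneg_nonneg)
  show "on_circle S (midpoint v w) \<subseteq> on_circle S v \<inter> on_circle S w"
  proof
    fix p assume p: "p \<in> on_circle S (midpoint v w)"
    then have "p \<in> S" "circle_power p v + circle_power p w = 0"
      by (simp_all add: on_circle_def circle_power_midpoint)
    moreover have "0 \<le> side A p * circle_power p v" "0 \<le> side A p * circle_power p w"
      using assms \<open>p \<in> S\<close> by (simp_all add: separating_iff_side)
    ultimately show "p \<in> on_circle S v \<inter> on_circle S w"
      by (auto simp: on_circle_def side_def split: if_splits)
  qed
qed

lemma voronoi_poset_iff_separating:
  fixes S :: "point set"
  assumes "finite S"
  shows "A \<in> voronoi_poset S \<longleftrightarrow> A \<subseteq> S \<and> (\<exists>q. separating S A q)"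
proof -
  have region: "p \<in> voronoi_region S A \<longleftrightarrow> (\<forall>x\<in>A. \<forall>y\<in>S - A. dist x p \<le> dist y p)" for p
    by (simp add: voronoi_region_def halfplane_def)
  show ?thesis
  proof
    assume "A \<in> voronoi_poset S"
    then obtain p where A: "A \<subseteq> S" and p: "p \<in> voronoi_region S A"
      unfolding voronoi_poset_def by auto
    have "(dist x p)\<^sup>2 \<le> (dist y p)\<^sup>2" if "x \<in> A" "y \<in> S - A" for x y
      using p that by (simp add: region power_mono)
    moreover have "finite A"
      using A assms by (rule finite_subset)
    ultimately obtain c where c: "\<And>x. x \<in> A \<Longrightarrow> (dist x p)\<^sup>2 \<le> c" "\<And>y. y \<in> S - A \<Longrightarrow> c \<le> (dist y p)\<^sup>2"
      using exists_threshold_between[of A "S - A" "\<lambda>x. (dist x p)\<^sup>2"] assms by blast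
    have "separating S A (p, c - (norm p)\<^sup>2)"
      using c by (auto simp: separating_def circle_power_eq_dist)
    then show "A \<subseteq> S \<and> (\<exists>q. separating S A q)"
      using A by blast
  next
    assume "A \<subseteq> S \<and> (\<exists>q. separating S A q)"
    then obtain u c where A: "A \<subseteq> S" and q: "separating S A (u, c)"
      by auto
    have "dist x u \<le> dist y u" if "x \<in> A" "y \<in> S - A" for x y
    proof -
      have "circle_power x (u, c) \<le> 0" "0 \<le> circle_power y (u, c)"
        using q that A unfolding separating_def by auto
      then have "(dist x u)\<^sup>2 \<le> (dist y u)\<^sup>2"
        unfolding circle_power_eq_dist by linarith
      then show ?thesis
        by (rule power2_le_imp_le) simp
    qed
    then have "u \<in> voronoi_region S A"
      by (simp add: region)
    then show "A \<in> voronoi_poset S"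
      using A by (auto simp: voronoi_poset_def)
  qed
qed

lemma finite_voronoi_poset: "finite S \<Longrightarrow> finite (voronoi_poset S)"
  by (rule finite_subset[of _ "Pow S"]) (auto simp: voronoi_poset_def)

lemma reduced_euler_char_eq_alternating_sum:
  fixes S :: "point set"
  assumes "finite S"
  shows "reduced_euler_char S = - (\<Sum>A\<in>voronoi_poset S. (-1) ^ card A)"
proof -
  let ?P = "voronoi_poset S"
  let ?I = "{-1..int (card S) - 1}"
  let ?rank = "\<lambda>A :: point set. int (card A) - 1"
  have "finite ?P"
    using assms by (rule finite_voronoi_poset)
  moreover have "?rank ` ?P \<subseteq> ?I"
  proof
    fix i assume "i \<in> ?rank ` ?P"
    then obtain A where "A \<in> ?P" "i = ?rank A"
      by blast
    moreover from this have "card A \<le> card S"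
      using assms by (simp add: voronoi_poset_def card_mono)
    ultimately show "i \<in> ?I"
      by simp
  qed
  moreover have "(-1) powi i * real (fbar S i) = (\<Sum>A\<in>{A \<in> ?P. ?rank A = i}. - ((-1) ^ card A))" for i
  proof -
    have "{A \<in> ?P. int (card A) = i + 1} = {A \<in> ?P. ?rank A = i}"
      by auto
    moreover have "- ((-1) ^ card A) = (-1::real) powi i" if "?rank A = i" for A
      using that minus_one_powi_pred[of "card A", where 'a = real] by simp
    ultimately show ?thesis
      by (simp add: fbar_def)
  qed
  ultimately have "reduced_euler_char S = (\<Sum>A\<in>?P. - ((-1) ^ card A))"
    unfolding reduced_euler_char_def by (simp add: sum.group)
  then show ?thesis
    by (simp add: sum_negf)
qed

section \<open>Minimising the power of a generic point over separating circles\<close>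

locale generic_sites =
  fixes S :: "point set" and z :: point
  assumes finite_S: "finite S"
    and no_three_collinear_S: "no_three_collinear S"
    and no_four_cocircular_S: "no_four_cocircular S"
    and z_notin_S: "z \<notin> S"
    and z_off_lines: "\<And>x y. x \<in> S \<Longrightarrow> y \<in> S \<Longrightarrow> x \<noteq> y \<Longrightarrow> \<not> collinear {z, x, y}"
begin

text \<open>For \<open>\<sigma> \<noteq> 0\<close> consider the linear programme: minimise \<open>\<sigma> * circle_power z q\<close> over the
  circles \<open>q\<close> separating \<open>A\<close>.  \<open>descent_ray \<sigma> A\<close> asks for a recession direction of its
  feasible region along which the objective decreases; \<open>flip \<sigma> A\<close> is meaningful only when the
  programme has an optimum, which is then unique.\<close>

definition descent_ray :: "real \<Rightarrow> point set \<Rightarrow> bool" where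
  "descent_ray \<sigma> A \<longleftrightarrow>
     (\<exists>d. \<sigma> * power_slope z d < 0 \<and> (\<forall>x\<in>S. 0 \<le> side A x * power_slope x d))"

definition optimal :: "real \<Rightarrow> point set \<Rightarrow> point \<times> real \<Rightarrow> bool" where
  "optimal \<sigma> A v \<longleftrightarrow> separating S A v \<and>
     (\<forall>q. separating S A q \<longrightarrow> \<sigma> * circle_power z v \<le> \<sigma> * circle_power z q)"

definition flip :: "real \<Rightarrow> point set \<Rightarrow> point set" where
  "flip \<sigma> A = sym_diff A (on_circle S (THE v. optimal \<sigma> A v))"

lemma optimalI:
  assumes "separating S A v" "\<And>q. separating S A q \<Longrightarrow> \<sigma> * circle_power z v \<le> \<sigma> * circle_power z q"
  shows "optimal \<sigma> A v"
  using assms unfolding optimal_def by blast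

lemma optimalD:
  assumes "optimal \<sigma> A v"
  shows "separating S A v" "separating S A q \<Longrightarrow> \<sigma> * circle_power z v \<le> \<sigma> * circle_power z q"
  using assms unfolding optimal_def by blast+

lemma not_collinear: "x \<in> S \<Longrightarrow> y \<in> S \<Longrightarrow> w \<in> S \<Longrightarrow> distinct [x, y, w] \<Longrightarrow> \<not> collinear {x, y, w}"
  using no_three_collinear_S unfolding no_three_collinear_def by auto

lemma on_circle_subset: "on_circle S q \<subseteq> S"
  by (auto simp: on_circle_def)

lemma finite_on_circle: "finite (on_circle S q)"
  using finite_S on_circle_subset by (rule finite_subset[rotated])

lemma card_on_circle_le_3: "card (on_circle S q) \<le> 3"
proof (cases "on_circle S q = {}")
  case False
  then obtain a where a: "a \<in> on_circle S q"
    by blast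
  obtain u c where q: "q = (u, c)"
    by fastforce
  have "on_circle S q \<subseteq> S \<inter> sphere u (dist u a)"
  proof
    fix x assume x: "x \<in> on_circle S q"
    then have "circle_power x (u, c) = 0" "circle_power a (u, c) = 0"
      using a by (simp_all add: on_circle_def q)
    then have "(dist x u)\<^sup>2 = (dist a u)\<^sup>2"
      unfolding circle_power_eq_dist by linarith
    then have "dist u x = dist u a"
      by (simp add: dist_commute)
    then show "x \<in> S \<inter> sphere u (dist u a)"
      using x by (simp add: on_circle_def)
  qed
  then have "card (on_circle S q) \<le> card (S \<inter> sphere u (dist u a))"
    using finite_S by (intro card_mono) auto
  then show ?thesis
    using card_sphere_le_3[OF no_four_cocircular_S, of u "dist u a"] by linarith
qed simp

lemma eq_if_on_circle_subset:
  assumes "3 \<le> card (on_circle S q)" "on_circle S q \<subseteq> on_circle S q'"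
  shows "q = q'"
proof -
  obtain x y w where xyw: "x \<in> on_circle S q" "y \<in> on_circle S q" "w \<in> on_circle S q" "distinct [x, y, w]"
    using assms(1) by (rule card_ge_3_obtains)
  then have "\<not> collinear {x, y, w}"
    using on_circle_subset by (intro not_collinear) blast+
  moreover have "circle_power p q = circle_power p q'" if "p \<in> on_circle S q" for p
    using that assms(2) by (auto simp: on_circle_def)
  ultimately show ?thesis
    using xyw by (intro circle_eq_if_powers_eq[of x y w]) simp_all
qed

lemma finite_vertices: "finite {q. 3 \<le> card (on_circle S q)}"
proof (rule finite_imageD)
  show "inj_on (on_circle S) {q. 3 \<le> card (on_circle S q)}"
  proof (rule inj_onI)
    fix q q' assume "q \<in> {q. 3 \<le> card (on_circle S q)}" "on_circle S q = on_circle S q'"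
    then show "q = q'"
      using eq_if_on_circle_subset[of q q'] by simp
  qed
  have "on_circle S ` {q. 3 \<le> card (on_circle S q)} \<subseteq> Pow S"
    using on_circle_subset by auto
  then show "finite (on_circle S ` {q. 3 \<le> card (on_circle S q)})"
    using finite_S by (auto intro: finite_subset)
qed

lemma exists_descent_direction:
  assumes "T \<subseteq> S" "card T < 3" "\<sigma> \<noteq> 0"
  shows "\<exists>d. \<sigma> * power_slope z d < 0 \<and> (\<forall>x\<in>T. power_slope x d = 0)"
proof -
  have "finite T"
    using assms(1) finite_S by (rule finite_subset)
  have "card T = 0 \<or> card T = 1 \<or> card T = 2"
    using assms(2) by linarith
  then consider "T = {}" | x where "T = {x}" | x y where "T = {x, y}" "x \<noteq> y"
    using \<open>finite T\<close> by (auto simp: card_1_singleton_iff card_2_iff)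
  then show ?thesis
  proof cases
    case 1
    have "\<sigma> * power_slope z (0, \<sigma>) = - \<sigma>\<^sup>2"
      by (simp add: power_slope_def power2_eq_square)
    then show ?thesis
      using 1 assms(3) by (intro exI[of _ "(0, \<sigma>)"]) auto
  next
    case (2 x)
    then have "(z - x) \<bullet> (z - x) \<noteq> 0"
      using assms(1) z_notin_S by auto
    moreover have "\<forall>w\<in>T. (w - x) \<bullet> (z - x) = 0"
      using 2 by simp
    ultimately show ?thesis
      by (rule exists_power_slope_direction[OF assms(3)])
  next
    case (3 x y)
    then have "\<not> collinear {x, z, y}"
      using assms(1) z_off_lines by (simp add: insert_commute)
    then have "(z - x) \<bullet> perp (y - x) \<noteq> 0"
      by (simp add: collinear_iff_inner_perp)
    moreover have "\<forall>w\<in>T. (w - x) \<bullet> perp (y - x) = 0"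
      using 3 by simp
    ultimately show ?thesis
      by (rule exists_power_slope_direction[OF assms(3)])
  qed
qed

lemma improve_separating_circle:
  assumes "separating S A q" "card (on_circle S q) < 3" "\<sigma> \<noteq> 0" "\<not> descent_ray \<sigma> A"
  obtains q' where "separating S A q'" "\<sigma> * circle_power z q' < \<sigma> * circle_power z q"
    "on_circle S q \<subset> on_circle S q'"
proof -
  obtain d where d: "\<sigma> * power_slope z d < 0" "\<And>x. x \<in> on_circle S q \<Longrightarrow> power_slope x d = 0"
    using exists_descent_direction[OF on_circle_subset assms(2,3)] by blast
  have "\<exists>x\<in>S. side A x * power_slope x d < 0"
    using assms(4) d(1) unfolding descent_ray_def by (meson not_le)
  then obtain t where t: "t > 0" "separating S A (q + t *\<^sub>R d)"
    "on_circle S q \<subset> on_circle S (q + t *\<^sub>R d)"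
    using separating_step_to_new_site[OF finite_S assms(1) d(2)] by blast
  have "\<sigma> * circle_power z (q + t *\<^sub>R d) = \<sigma> * circle_power z q + t * (\<sigma> * power_slope z d)"
    by (simp add: circle_power_add_scaleR algebra_simps)
  moreover have "t * (\<sigma> * power_slope z d) < 0"
    using t(1) d(1) by (rule mult_pos_neg)
  ultimately show ?thesis
    using t(2,3) by (intro that[of "q + t *\<^sub>R d"]) auto
qed

lemma descent_to_vertex:
  assumes "separating S A q" "\<sigma> \<noteq> 0" "\<not> descent_ray \<sigma> A"
  shows "\<exists>v. separating S A v \<and> card (on_circle S v) = 3 \<and> \<sigma> * circle_power z v \<le> \<sigma> * circle_power z q"
  using assms(1)
proof (induction "card (S - on_circle S q)" arbitrary: q rule: less_induct)
  case less
  show ?case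
  proof (cases "card (on_circle S q) < 3")
    case False
    then have "card (on_circle S q) = 3"
      using card_on_circle_le_3[of q] by linarith
    then show ?thesis
      using less.prems by blast
  next
    case True
    obtain q' where q': "separating S A q'" "\<sigma> * circle_power z q' < \<sigma> * circle_power z q"
      "on_circle S q \<subset> on_circle S q'"
      using improve_separating_circle[OF less.prems True assms(2,3)] by blast
    have "S - on_circle S q' \<subset> S - on_circle S q"
      using q'(3) on_circle_subset[of q'] by blast
    then have "card (S - on_circle S q') < card (S - on_circle S q)"
      using finite_S by (intro psubset_card_mono) auto
    then obtain v where "separating S A v" "card (on_circle S v) = 3"
      "\<sigma> * circle_power z v \<le> \<sigma> * circle_power z q'"
      using less.hyps q'(1) by blast
    then show ?thesis
      using q'(2) by (intro exI[of _ v]) auto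
  qed
qed

lemma optimal_exists:
  assumes "separating S A q" "\<sigma> \<noteq> 0" "\<not> descent_ray \<sigma> A"
  obtains v where "optimal \<sigma> A v"
proof -
  define V where "V = {v. separating S A v \<and> card (on_circle S v) = 3}"
  have "finite V"
    using finite_vertices by (rule finite_subset[rotated]) (auto simp: V_def)
  moreover have "V \<noteq> {}"
    using descent_to_vertex[OF assms] by (auto simp: V_def)
  ultimately obtain v where "is_arg_min (\<lambda>v. \<sigma> * circle_power z v) (\<lambda>v. v \<in> V) v"
    using ex_is_arg_min_if_finite by blast
  then have v: "v \<in> V" "\<And>w. w \<in> V \<Longrightarrow> \<sigma> * circle_power z v \<le> \<sigma> * circle_power z w"
    by (auto simp: is_arg_min_linorder)
  have "optimal \<sigma> A v"
  proof (rule optimalI)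
    show "separating S A v"
      using v(1) by (simp add: V_def)
    fix q assume "separating S A q"
    then obtain w where "separating S A w" "card (on_circle S w) = 3"
      and w: "\<sigma> * circle_power z w \<le> \<sigma> * circle_power z q"
      using descent_to_vertex assms(2,3) by blast
    then have "w \<in> V"
      by (simp add: V_def)
    then show "\<sigma> * circle_power z v \<le> \<sigma> * circle_power z q"
      using v(2)[of w] w by linarith
  qed
  then show ?thesis
    by (rule that)
qed

lemma optimal_imp_not_descent_ray:
  assumes "optimal \<sigma> A v"
  shows "\<not> descent_ray \<sigma> A"
proof
  assume "descent_ray \<sigma> A"
  then obtain d where d: "\<sigma> * power_slope z d < 0" "\<And>x. x \<in> S \<Longrightarrow> 0 \<le> side A x * power_slope x d"
    unfolding descent_ray_def by blast
  have power_v_d: "circle_power x (v + d) = circle_power x v + power_slope x d" for x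
    using circle_power_add_scaleR[of x v 1 d] by simp
  have "separating S A (v + d)"
    using optimalD(1)[OF assms] d(2) by (simp add: separating_iff_side power_v_d distrib_left)
  then have "\<sigma> * circle_power z v \<le> \<sigma> * circle_power z (v + d)"
    by (rule optimalD(2)[OF assms])
  then show False
    using d(1) by (simp add: power_v_d distrib_left)
qed

lemma card_on_circle_optimal:
  assumes "optimal \<sigma> A v" "\<sigma> \<noteq> 0"
  shows "card (on_circle S v) = 3"
proof (rule ccontr)
  assume "card (on_circle S v) \<noteq> 3"
  then have "card (on_circle S v) < 3"
    using card_on_circle_le_3[of v] by linarith
  then obtain q' where q': "separating S A q'" "\<sigma> * circle_power z q' < \<sigma> * circle_power z v"
    using improve_separating_circle[OF optimalD(1)[OF assms(1)] _ assms(2)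
        optimal_imp_not_descent_ray[OF assms(1)]] by blast
  then show False
    using optimalD(2)[OF assms(1) q'(1)] by linarith
qed

lemma optimal_unique:
  assumes "optimal \<sigma> A v" "optimal \<sigma> A w" "\<sigma> \<noteq> 0"
  shows "v = w"
proof -
  define m where "m = midpoint v w"
  have sep_v: "separating S A v" and sep_w: "separating S A w"
    using assms(1,2) by (simp_all add: optimalD)
  have same_value: "\<sigma> * circle_power z v = \<sigma> * circle_power z w"
    using optimalD(2)[OF assms(1) sep_w] optimalD(2)[OF assms(2) sep_v] by (rule order.antisym)
  have "\<sigma> * circle_power z m = (\<sigma> * circle_power z v + \<sigma> * circle_power z w) / 2"
    by (simp add: m_def circle_power_midpoint algebra_simps)
  also have "\<dots> = \<sigma> * circle_power z v"
    unfolding same_value by simp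
  finally have m_value: "\<sigma> * circle_power z m = \<sigma> * circle_power z v" .
  have "separating S A m"
    unfolding m_def using sep_v sep_w by (rule separating_midpoint)
  then have "optimal \<sigma> A m"
  proof (rule optimalI)
    show "\<sigma> * circle_power z m \<le> \<sigma> * circle_power z q" if "separating S A q" for q
      unfolding m_value using that by (rule optimalD(2)[OF assms(1)])
  qed
  then have "3 \<le> card (on_circle S m)"
    using assms(3) card_on_circle_optimal by simp
  moreover have "on_circle S m \<subseteq> on_circle S v" "on_circle S m \<subseteq> on_circle S w"
    unfolding m_def using separating_midpoint(2)[OF sep_v sep_w] by auto
  ultimately show ?thesis
    using eq_if_on_circle_subset by metis
qed

lemma optimal_sym_diff_on_circle:
  assumes "optimal \<sigma> A v"
  shows "optimal (- \<sigma>) (sym_diff A (on_circle S v)) v"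
proof (rule optimalI)
  have sep_v: "separating S A v"
    using assms by (rule optimalD)
  then show "separating S (sym_diff A (on_circle S v)) v"
    by (auto simp: separating_iff_side side_sym_diff on_circle_def)
  fix q assume "separating S (sym_diff A (on_circle S v)) q"
  then obtain t where t: "t > 0" "separating S A (v + t *\<^sub>R (v - q))"
    using separating_step_away[OF finite_S sep_v] by blast
  have "\<sigma> * circle_power z v \<le> \<sigma> * circle_power z (v + t *\<^sub>R (v - q))"
    using t(2) by (rule optimalD(2)[OF assms])
  then have "0 \<le> t * (\<sigma> * circle_power z v - \<sigma> * circle_power z q)"
    unfolding circle_power_step_away by (simp add: algebra_simps)
  then show "- \<sigma> * circle_power z v \<le> - \<sigma> * circle_power z q"
    using t(1) by (simp add: zero_le_mult_iff)
qed

lemma card_power_slope_zeros_le_2: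
  assumes "d \<noteq> 0"
  shows "card {x \<in> S. power_slope x d = 0} \<le> 2"
proof (rule ccontr)
  assume "\<not> ?thesis"
  then have "3 \<le> card {x \<in> S. power_slope x d = 0}"
    by simp
  then obtain x y y' where xyy': "x \<in> S" "y \<in> S" "y' \<in> S" "distinct [x, y, y']"
    "power_slope x d = 0" "power_slope y d = 0" "power_slope y' d = 0"
    by (rule card_ge_3_obtains) blast
  then have "\<not> collinear {x, y, y'}"
    by (intro not_collinear)
  then show False
    using power_slope_eq_0_imp_eq_0 xyy'(5-7) assms by blast
qed

lemma descent_ray_imp_separating:
  assumes "descent_ray \<sigma> A"
  obtains q where "separating S A q"
proof -
  obtain d where d: "\<sigma> * power_slope z d < 0" "\<And>x. x \<in> S \<Longrightarrow> 0 \<le> side A x * power_slope x d"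
    using assms unfolding descent_ray_def by blast
  define Z where "Z = {x \<in> S. power_slope x d = 0}"
  have "d \<noteq> 0"
    using d(1) by (auto simp: power_slope_def)
  then have "card Z \<le> 2"
    unfolding Z_def by (rule card_power_slope_zeros_le_2)
  moreover have "finite Z"
    using finite_S by (simp add: Z_def)
  ultimately obtain q0 where q0: "\<And>x. x \<in> Z \<Longrightarrow> circle_power x q0 = 0"
    using exists_circle_through_le_2 by blast
  define a where "a x = side A x * circle_power x q0" for x
  define b where "b x = side A x * power_slope x d" for x
  have "b x = 0 \<Longrightarrow> 0 \<le> a x" if "x \<in> S" for x
    using that q0 by (simp add: a_def b_def Z_def side_def split: if_splits)
  then obtain s where s: "\<And>x. x \<in> S \<Longrightarrow> 0 \<le> a x + s * b x"
    using exists_large_step_nonneg[of S b a] finite_S d(2) by (auto simp: b_def)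
  have "separating S A (q0 + s *\<^sub>R d)"
    using s by (simp add: separating_iff_side circle_power_add_scaleR a_def b_def algebra_simps)
  then show ?thesis
    by (rule that)
qed

lemma descent_ray_complement:
  assumes "descent_ray \<sigma> A"
  shows "descent_ray (- \<sigma>) (S - A)"
proof -
  obtain d where "\<sigma> * power_slope z d < 0" "\<forall>x\<in>S. 0 \<le> side A x * power_slope x d"
    using assms unfolding descent_ray_def by blast
  then have "- \<sigma> * power_slope z (- d) < 0" "\<forall>x\<in>S. 0 \<le> side (S - A) x * power_slope x (- d)"
    by (simp_all add: power_slope_uminus side_Diff)
  then show ?thesis
    unfolding descent_ray_def by blast
qed

lemma flip_eq:
  assumes "optimal \<sigma> A v" "\<sigma> \<noteq> 0"
  shows "flip \<sigma> A = sym_diff A (on_circle S v)"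
proof -
  have "(THE v. optimal \<sigma> A v) = v"
    using assms optimal_unique by blast
  then show ?thesis
    by (simp add: flip_def)
qed

lemma flip_sign_reversing_involution:
  assumes "A \<in> voronoi_poset S" "\<not> descent_ray \<sigma> A" "\<sigma> \<noteq> 0"
  shows "flip \<sigma> A \<in> voronoi_poset S" and "\<not> descent_ray (- \<sigma>) (flip \<sigma> A)"
    and "flip (- \<sigma>) (flip \<sigma> A) = A" and "(-1::real) ^ card (flip \<sigma> A) = - ((-1) ^ card A)"
proof -
  obtain q where A: "A \<subseteq> S" "separating S A q"
    using assms(1) voronoi_poset_iff_separating[OF finite_S] by blast
  then obtain v where opt: "optimal \<sigma> A v"
    using optimal_exists assms(2,3) by blast
  let ?A' = "sym_diff A (on_circle S v)"
  have flip: "flip \<sigma> A = ?A'"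
    using opt assms(3) by (rule flip_eq)
  have opt': "optimal (- \<sigma>) ?A' v"
    using opt by (rule optimal_sym_diff_on_circle)
  have "?A' \<subseteq> S"
    using A(1) on_circle_subset[of v] by (auto simp: sym_diff_def)
  then show "flip \<sigma> A \<in> voronoi_poset S"
    unfolding flip voronoi_poset_iff_separating[OF finite_S] using optimalD(1)[OF opt'] by blast
  show "\<not> descent_ray (- \<sigma>) (flip \<sigma> A)"
    using optimal_imp_not_descent_ray[OF opt'] by (simp add: flip)
  show "flip (- \<sigma>) (flip \<sigma> A) = A"
    using flip_eq[OF opt'] assms(3) by (simp add: flip sym_diff_sym_diff_cancel)
  have "finite A"
    using A(1) finite_S by (rule finite_subset)
  moreover have "card (on_circle S v) = 3"
    using opt assms(3) by (rule card_on_circle_optimal)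
  ultimately show "(-1::real) ^ card (flip \<sigma> A) = - ((-1) ^ card A)"
    using minus_one_power_card_sym_diff[OF _ finite_on_circle, of A v] by (simp add: flip)
qed

lemma complement_descent_ray:
  assumes "A \<in> voronoi_poset S" "descent_ray \<sigma> A"
  shows "S - A \<in> voronoi_poset S" and "descent_ray (- \<sigma>) (S - A)"
proof -
  show ray: "descent_ray (- \<sigma>) (S - A)"
    using assms(2) by (rule descent_ray_complement)
  obtain q where "separating S (S - A) q"
    using ray by (rule descent_ray_imp_separating)
  then show "S - A \<in> voronoi_poset S"
    unfolding voronoi_poset_iff_separating[OF finite_S] by blast
qed

lemma alternating_sum_voronoi_poset:
  assumes "odd (card S)"
  shows "(\<Sum>A\<in>voronoi_poset S. (-1::real) ^ card A) = 0"
proof (rule sum_eq_0_by_sign_reversing_bijections[where p = "descent_ray 1" and q = "descent_ray (-1)"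
      and h = "flip 1" and k = "\<lambda>A. S - A"])
  have subset_S: "A \<subseteq> S" if "A \<in> voronoi_poset S" for A
    using that by (simp add: voronoi_poset_def)
  have double_complement: "S - (S - A) = A" if "A \<in> voronoi_poset S" for A
    using that by (auto simp: voronoi_poset_def)
  show "finite (voronoi_poset S)"
    using finite_S by (rule finite_voronoi_poset)
  show "bij_betw (flip 1) {A \<in> voronoi_poset S. \<not> descent_ray 1 A}
      {A \<in> voronoi_poset S. \<not> descent_ray (- 1) A}"
    by (rule bij_betw_byWitness[where f' = "flip (-1)"])
      (use flip_sign_reversing_involution[of _ 1] flip_sign_reversing_involution[of _ "-1"] in auto)
  show "(-1::real) ^ card (flip 1 A) = - ((-1) ^ card A)"
    if "A \<in> voronoi_poset S" "\<not> descent_ray 1 A" for A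
    using that by (simp add: flip_sign_reversing_involution)
  show "bij_betw (\<lambda>A. S - A) {A \<in> voronoi_poset S. descent_ray (- 1) A}
      {A \<in> voronoi_poset S. descent_ray 1 A}"
    by (rule bij_betw_byWitness[where f' = "\<lambda>A. S - A"])
      (use complement_descent_ray[of _ 1] complement_descent_ray[of _ "-1"] double_complement in auto)
  show "(-1) ^ card (S - A) = - ((-1::real) ^ card A)"
    if "A \<in> voronoi_poset S" "descent_ray (- 1) A" for A
  proof -
    have "S - A = sym_diff A S"
      using subset_S[OF that(1)] by (auto simp: sym_diff_def)
    then show ?thesis
      using minus_one_power_card_sym_diff[of A S] finite_S subset_S[OF that(1)] assms
      by (simp add: finite_subset)
  qed
qed

end

theorem mainTheorem9:
  fixes S :: "point set"
  assumes "finite S"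
    and "card S \<ge> 3"
    and "odd (card S)"
    and "no_three_collinear S"
    and "no_four_cocircular S"
  shows "reduced_euler_char S = 0"
proof -
  obtain z where "z \<notin> S" "\<And>x y. x \<in> S \<Longrightarrow> y \<in> S \<Longrightarrow> x \<noteq> y \<Longrightarrow> \<not> collinear {z, x, y}"
    using exists_point_off_lines[OF assms(1)] by blast
  then interpret generic_sites S z
    using assms by unfold_locales
  show ?thesis
    using reduced_euler_char_eq_alternating_sum[OF assms(1)] alternating_sum_voronoi_poset[OF assms(3)]
    by simp
qed

end
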